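(* Let $k \geq 3$ and let $G$ be a diregular $(2,k,+3)$-digraph. Then $G$ contains a pair of distinct vertices $u,v$ with exactly one common out-neighbour, i.e. $|N^+(u)\cap N^+(v)|=1$.
   Context: A digraph $G$ is $k$-geodetic if for every ordered pair of (not necessarily distinct) vertices $x,y$ there is at most one directed path from $x$ to $y$ of length at most $k$ (the trivial path of length $0$ counts, so there are no directed cycles of length at most $k$). $M(d,k)=1+d+\dots+d^k$. A $(d,k,+\epsilon)$-digraph is a $k$-geodetic digraph with minimum out-degree $d$ and order $M(d,k)+\epsilon$; it is diregular if every vertex has in-degree and out-degree exactly $d$. $N^+(x)$ denotes the set of out-neighbours of $x$. *)

theory Defs
  imports Main
begin

definition digraph :: "'a set \<Rightarrow> ('a \<Rightarrow> 'a \<Rightarrow> bool) \<Rightarrow> bool" where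
  "digraph V E \<longleftrightarrow> finite V \<and> (\<forall>x y. E x y \<longrightarrow> x \<in> V \<and> y \<in> V)"

definition out_nbrs :: "('a \<Rightarrow> 'a \<Rightarrow> bool) \<Rightarrow> 'a \<Rightarrow> 'a set" where
  "out_nbrs E x = {y. E x y}"

definition in_nbrs :: "('a \<Rightarrow> 'a \<Rightarrow> bool) \<Rightarrow> 'a \<Rightarrow> 'a set" where
  "in_nbrs E x = {y. E y x}"

text \<open>A directed walk from x to y, given as its vertex list; its length is length p - 1.\<close>
definition dwalk :: "('a \<Rightarrow> 'a \<Rightarrow> bool) \<Rightarrow> 'a list \<Rightarrow> 'a \<Rightarrow> 'a \<Rightarrow> bool" where
  "dwalk E p x y \<longleftrightarrow> p \<noteq> [] \<and> hd p = x \<and> last p = y \<and>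
     (\<forall>i. Suc i < length p \<longrightarrow> E (p ! i) (p ! Suc i))"

text \<open>k-geodetic: for all (not necessarily distinct) x, y in V there is at most one
  directed walk of length at most k from x to y (the trivial walk counts).\<close>
definition k_geodetic :: "'a set \<Rightarrow> ('a \<Rightarrow> 'a \<Rightarrow> bool) \<Rightarrow> nat \<Rightarrow> bool" where
  "k_geodetic V E k \<longleftrightarrow> (\<forall>x\<in>V. \<forall>y\<in>V. \<forall>p q.
     dwalk E p x y \<and> length p \<le> k + 1 \<and> dwalk E q x y \<and> length q \<le> k + 1 \<longrightarrow> p = q)"

definition moore_bound :: "nat \<Rightarrow> nat \<Rightarrow> nat" where
  "moore_bound d k = (\<Sum>i\<le>k. d ^ i)"

definition diregular_dk_eps :: "'a set \<Rightarrow> ('a \<Rightarrow> 'a \<Rightarrow> bool) \<Rightarrow> nat \<Rightarrow> nat \<Rightarrow> nat \<Rightarrow> bool" where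
  "diregular_dk_eps V E d k eps \<longleftrightarrow> digraph V E \<and> k_geodetic V E k \<and>
     (\<forall>x\<in>V. card (out_nbrs E x) = d \<and> card (in_nbrs E x) = d) \<and>
     card V = moore_bound d k + eps"

end

theory Submission
  imports Defs
begin

(*
  Suppose no two distinct vertices have exactly one common out-neighbour. As all degrees
  are 2, any two vertices with a common out-neighbour then have the same out-neighbourhood,
  so every vertex has an out-twin, and also an in-twin (a vertex with the same
  in-neighbourhood). Fix x with out-neighbours e, e'. Geodeticity keeps the out-twin y of x,
  the in-twin q of x and the in-twin r of y at distance more than k from x; as there are only
  3 vertices beyond the M(2,k) vertices of the k-out-ball of x, these are all of them.
  The out-twin f of e is none of y, q, r, so it is reached from x by a walk of length at
  most k, which must start with the arc to e' and have length exactly k. The second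
  in-neighbour h of f then lies outside the ball, yet it is none of y, q, r either.
*)

lemma mem_out_nbrs_iff [simp]: "y \<in> out_nbrs E x \<longleftrightarrow> E x y"
  by (simp add: out_nbrs_def)

lemma mem_in_nbrs_iff [simp]: "y \<in> in_nbrs E x \<longleftrightarrow> E y x"
  by (simp add: in_nbrs_def)

lemma card_2_obtain_other:
  assumes "card A = 2" "a \<in> A"
  obtains b where "b \<noteq> a" "A = {a, b}"
proof -
  have "card (A - {a}) = 1" using assms by (simp add: card_Diff_singleton)
  then obtain b where "A - {a} = {b}" by (auto simp: card_Suc_eq)
  then show ?thesis using that assms(2) by blast
qed

lemma dwalk_Nil [simp]: "\<not> dwalk E [] x y"
  by (simp add: dwalk_def)

lemma dwalk_singleton_iff [simp]: "dwalk E [a] x y \<longleftrightarrow> x = a \<and> y = a"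
  by (auto simp: dwalk_def)

lemma dwalk_Cons_Cons_iff [simp]:
  "dwalk E (a # b # p) x y \<longleftrightarrow> x = a \<and> E a b \<and> dwalk E (b # p) b y"
  unfolding dwalk_def by (auto simp: less_Suc_eq_0_disj)

lemma dwalk_Cons_iff:
  "p \<noteq> [] \<Longrightarrow> dwalk E (a # p) x y \<longleftrightarrow> x = a \<and> E a (hd p) \<and> dwalk E p (hd p) y"
  by (cases p) auto

lemma dwalk_length_ge_2: "dwalk E p x y \<Longrightarrow> x \<noteq> y \<Longrightarrow> 2 \<le> length p"
  by (cases p; cases "tl p") auto

lemma dwalk_snoc:
  assumes "dwalk E p x y" "E y z"
  shows "dwalk E (p @ [z]) x z"
  using assms
proof (induction p arbitrary: x)
  case (Cons a p)
  then show ?case by (cases p) auto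
qed simp

lemma dwalk_snoc_iff:
  "p \<noteq> [] \<Longrightarrow> dwalk E (p @ [z]) x y \<longleftrightarrow> dwalk E p x (last p) \<and> E (last p) z \<and> y = z"
proof (induction p arbitrary: x)
  case (Cons a p)
  then show ?case by (cases p) auto
qed simp

lemma dwalk_butlast_snoc:
  assumes "dwalk E p x y" "x \<noteq> y" "in_nbrs E y = in_nbrs E z"
  shows "dwalk E (butlast p @ [z]) x z"
proof -
  have p: "p = butlast p @ [y]" using assms(1) by (auto simp: dwalk_def)
  have ne: "butlast p \<noteq> []" using dwalk_length_ge_2[OF assms(1,2)] by (cases p rule: rev_cases) auto
  then have "dwalk E (butlast p) x (last (butlast p))" "E (last (butlast p)) y"
    using dwalk_snoc_iff[OF ne] assms(1) p by metis+
  moreover have "E (last (butlast p)) z" using calculation(2) assms(3) by (metis mem_in_nbrs_iff)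
  ultimately show ?thesis using dwalk_snoc_iff[OF ne] by blast
qed

locale k_geodetic_digraph =
  fixes V :: "'a set" and E :: "'a \<Rightarrow> 'a \<Rightarrow> bool" and k :: nat
  assumes digraph: "digraph V E" and geodetic: "k_geodetic V E k"
begin

lemma finite_V: "finite V"
  using digraph by (simp add: digraph_def)

lemma arc_in_V: "E a b \<Longrightarrow> a \<in> V \<and> b \<in> V"
  using digraph by (simp add: digraph_def)

lemma finite_out_nbrs: "finite (out_nbrs E x)"
  by (rule finite_subset[OF _ finite_V]) (auto dest: arc_in_V)

lemma finite_in_nbrs: "finite (in_nbrs E x)"
  by (rule finite_subset[OF _ finite_V]) (auto dest: arc_in_V)

lemma dwalk_last_in_V:
  assumes "dwalk E p x y" "x \<in> V"
  shows "y \<in> V"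
proof (cases "x = y")
  case False
  have p: "p = butlast p @ [y]" using assms(1) by (auto simp: dwalk_def)
  have "butlast p \<noteq> []" using dwalk_length_ge_2[OF assms(1) False] by (cases p rule: rev_cases) auto
  then have "E (last (butlast p)) y" using dwalk_snoc_iff assms(1) p by metis
  then show ?thesis using arc_in_V by blast
qed (use assms in simp)

lemma dwalk_unique:
  assumes "dwalk E p x y" "dwalk E q x y" "length p \<le> Suc k" "length q \<le> Suc k" "x \<in> V"
  shows "p = q"
  using geodetic assms dwalk_last_in_V[OF assms(1,5)] unfolding k_geodetic_def by auto

lemma short_closed_dwalk: "dwalk E p x x \<Longrightarrow> length p \<le> Suc k \<Longrightarrow> x \<in> V \<Longrightarrow> p = [x]"
  using dwalk_unique[of p x x "[x]"] by simp

lemma no_loop: "1 \<le> k \<Longrightarrow> \<not> E a a"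
  using short_closed_dwalk[of "[a, a]" a] arc_in_V by auto

lemma out_twin_unreachable:
  assumes "x \<in> V" "x \<noteq> y" "out_nbrs E x = out_nbrs E y" "dwalk E p x y" "length p \<le> Suc k"
  shows False
proof -
  obtain p' where p: "p = x # p'" using assms(4) by (cases p) (auto simp: dwalk_def)
  have ne: "p' \<noteq> []" using assms(2,4) p by auto
  let ?z = "hd p'"
  have xz: "E x ?z" and p': "dwalk E p' ?z y" using assms(4) dwalk_Cons_iff[OF ne] p by auto
  have "E y ?z" using xz assms(3) by (metis mem_out_nbrs_iff)
  \<comment> \<open>Replacing the first arc of the walk by the arc from its end yields a short cycle through ?z.\<close>
  with p' have "dwalk E (p' @ [?z]) ?z ?z" by (rule dwalk_snoc)
  moreover have "length (p' @ [?z]) \<le> Suc k" using assms(5) p by simp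
  moreover have "?z \<in> V" using arc_in_V xz by blast
  ultimately have "p' @ [?z] = [?z]" by (rule short_closed_dwalk)
  then show False using ne by simp
qed

definition layer :: "nat \<Rightarrow> 'a \<Rightarrow> 'a set" where
  "layer j x = {z. \<exists>p. dwalk E p x z \<and> length p = Suc j}"

definition out_ball :: "'a \<Rightarrow> 'a set" where
  "out_ball x = {z. \<exists>p. dwalk E p x z \<and> length p \<le> Suc k}"

lemma layer_0: "layer 0 x = {x}"
proof -
  have "length p = Suc 0 \<longleftrightarrow> (\<exists>a. p = [a])" for p :: "'a list"
    by (cases p) auto
  then show ?thesis by (auto simp: layer_def intro: exI[of _ "[x]"])
qed

lemma layer_Suc: "layer (Suc j) x = (\<Union>z\<in>layer j x. out_nbrs E z)"
proof -
  have "dwalk E p x w \<and> length p = Suc (Suc j) \<longleftrightarrow>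
        (\<exists>q z. p = q @ [w] \<and> dwalk E q x z \<and> length q = Suc j \<and> E z w)" for p w
  proof
    assume p: "dwalk E p x w \<and> length p = Suc (Suc j)"
    then have "p = butlast p @ [w]" "butlast p \<noteq> []"
      by (auto simp: dwalk_def) (cases p rule: rev_cases; simp)
    then show "\<exists>q z. p = q @ [w] \<and> dwalk E q x z \<and> length q = Suc j \<and> E z w"
      using p dwalk_snoc_iff by (metis length_butlast diff_Suc_1)
  qed (auto intro: dwalk_snoc)
  then show ?thesis unfolding layer_def by auto blast
qed

lemma layer_subset_V: "x \<in> V \<Longrightarrow> layer j x \<subseteq> V"
  using dwalk_last_in_V by (auto simp: layer_def)

lemma finite_layer: "x \<in> V \<Longrightarrow> finite (layer j x)"
  using layer_subset_V finite_V finite_subset by blast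

lemma card_layer:
  assumes out_degree: "\<And>v. v \<in> V \<Longrightarrow> card (out_nbrs E v) = d" and "x \<in> V" "j \<le> k"
  shows "card (layer j x) = d ^ j"
  using \<open>j \<le> k\<close>
proof (induction j)
  case 0
  then show ?case by (simp add: layer_0)
next
  case (Suc j)
  have disjoint: "out_nbrs E z1 \<inter> out_nbrs E z2 = {}"
    if z: "z1 \<in> layer j x" "z2 \<in> layer j x" "z1 \<noteq> z2" for z1 z2
  proof (rule ccontr)
    assume "out_nbrs E z1 \<inter> out_nbrs E z2 \<noteq> {}"
    then obtain w where w: "E z1 w" "E z2 w" by auto
    obtain p1 p2 where p: "dwalk E p1 x z1" "length p1 = Suc j" "dwalk E p2 x z2" "length p2 = Suc j"
      using z by (auto simp: layer_def)
    have "p1 @ [w] = p2 @ [w]"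
      using dwalk_unique[OF dwalk_snoc[OF p(1) w(1)] dwalk_snoc[OF p(3) w(2)]] p Suc.prems assms(2)
      by simp
    then show False using p z(3) by (auto simp: dwalk_def)
  qed
  have "card (layer (Suc j) x) = (\<Sum>z\<in>layer j x. card (out_nbrs E z))"
    unfolding layer_Suc
    by (rule card_UN_disjoint[OF finite_layer[OF assms(2)]]) (use finite_out_nbrs disjoint in auto)
  also have "\<dots> = (\<Sum>z\<in>layer j x. d)"
    using layer_subset_V[OF assms(2)] out_degree by (intro sum.cong) auto
  also have "\<dots> = d ^ Suc j" using Suc by simp
  finally show ?case .
qed

lemma out_ball_eq_UN_layer: "out_ball x = (\<Union>j\<le>k. layer j x)"
proof -
  have "length p \<le> Suc k \<longleftrightarrow> (\<exists>j\<le>k. length p = Suc j)" if "dwalk E p x z" for p z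
    using that by (cases p) auto
  then show ?thesis unfolding out_ball_def layer_def by blast
qed

lemma out_ball_subset_V: "x \<in> V \<Longrightarrow> out_ball x \<subseteq> V"
  using dwalk_last_in_V by (auto simp: out_ball_def)

lemma card_out_ball:
  assumes "\<And>v. v \<in> V \<Longrightarrow> card (out_nbrs E v) = d" and "x \<in> V"
  shows "card (out_ball x) = moore_bound d k"
proof -
  have disjoint: "layer i x \<inter> layer j x = {}" if "i \<le> k" "j \<le> k" "i \<noteq> j" for i j
  proof (rule ccontr)
    assume "layer i x \<inter> layer j x \<noteq> {}"
    then obtain z p q where "dwalk E p x z" "length p = Suc i" "dwalk E q x z" "length q = Suc j"
      by (auto simp: layer_def)
    with dwalk_unique[of p x z q] that assms(2) show False by auto
  qed
  have "card (out_ball x) = (\<Sum>j\<le>k. card (layer j x))"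
    unfolding out_ball_eq_UN_layer
    by (rule card_UN_disjoint) (use finite_layer[OF assms(2)] disjoint in auto)
  also have "\<dots> = (\<Sum>j\<le>k. d ^ j)" using card_layer[OF assms] by (intro sum.cong) auto
  finally show ?thesis by (simp add: moore_bound_def)
qed

end

locale two_diregular = k_geodetic_digraph +
  assumes out_degree: "x \<in> V \<Longrightarrow> card (out_nbrs E x) = 2"
    and in_degree: "x \<in> V \<Longrightarrow> card (in_nbrs E x) = 2"
    and k_ge_3: "3 \<le> k"
begin

lemma ex_out_nbr: "x \<in> V \<Longrightarrow> \<exists>m. E x m"
  using out_degree[of x] by (metis card.empty ex_in_conv mem_out_nbrs_iff zero_neq_numeral)

lemma ex_in_nbr: "x \<in> V \<Longrightarrow> \<exists>u. E u x"
  using in_degree[of x] by (metis card.empty ex_in_conv mem_in_nbrs_iff zero_neq_numeral)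

lemma out_twin_in_V:
  assumes "out_nbrs E a = out_nbrs E b" "a \<in> V"
  shows "b \<in> V"
proof -
  obtain m where "E a m" using ex_out_nbr[OF assms(2)] by blast
  then have "E b m" using assms(1) by (metis mem_out_nbrs_iff)
  then show ?thesis using arc_in_V by blast
qed

lemma in_twin_in_V:
  assumes "in_nbrs E a = in_nbrs E b" "a \<in> V"
  shows "b \<in> V"
proof -
  obtain u where "E u a" using ex_in_nbr[OF assms(2)] by blast
  then have "E u b" using assms(1) by (metis mem_in_nbrs_iff)
  then show ?thesis using arc_in_V by blast
qed

lemma in_twin_dwalks_eq:
  assumes "a \<in> V" "in_nbrs E a = in_nbrs E b"
    and "dwalk E p a z" "dwalk E q b z" "length p \<le> k" "length q \<le> k"
  shows "p = q"
proof -
  obtain u where ua: "E u a" using ex_in_nbr[OF assms(1)] by blast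
  then have ub: "E u b" using assms(2) by (metis mem_in_nbrs_iff)
  have p: "p \<noteq> []" "hd p = a" and q: "q \<noteq> []" "hd q = b"
    using assms(3,4) by (auto simp: dwalk_def)
  \<comment> \<open>Both walks extend backwards through the common in-neighbour u.\<close>
  have "dwalk E (u # p) u z" using dwalk_Cons_iff[OF p(1)] p ua assms(3) by simp
  moreover have "dwalk E (u # q) u z" using dwalk_Cons_iff[OF q(1)] q ub assms(4) by simp
  ultimately have "u # p = u # q"
    by (rule dwalk_unique) (use assms(5,6) arc_in_V ua in auto)
  then show ?thesis by simp
qed

lemma in_twins_eq_if_common_out_nbr:
  "a \<in> V \<Longrightarrow> in_nbrs E a = in_nbrs E b \<Longrightarrow> E a m \<Longrightarrow> E b m \<Longrightarrow> a = b"
  using in_twin_dwalks_eq[of a b "[a, m]" m "[b, m]"] k_ge_3 by simp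

lemma outliers_eq:
  assumes card_V: "card V = moore_bound 2 k + 3" and "x \<in> V"
    and y: "y \<noteq> x" "out_nbrs E y = out_nbrs E x"
    and q: "q \<noteq> x" "in_nbrs E q = in_nbrs E x"
    and r: "r \<noteq> y" "in_nbrs E r = in_nbrs E y"
  shows "V - out_ball x = {y, q, r}"
proof -
  obtain m where xm: "E x m" using ex_out_nbr[OF \<open>x \<in> V\<close>] by blast
  then have "E y m" using y(2) by (metis mem_out_nbrs_iff)
  then have in_xy: "in_nbrs E x \<noteq> in_nbrs E y"
    using in_twins_eq_if_common_out_nbr[OF \<open>x \<in> V\<close> _ xm] y(1) by blast
  have y_V: "y \<in> V" using out_twin_in_V[OF y(2)[symmetric] \<open>x \<in> V\<close>] .
  have q_V: "q \<in> V" using in_twin_in_V[OF q(2)[symmetric] \<open>x \<in> V\<close>] .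
  have r_V: "r \<in> V" using in_twin_in_V[OF r(2)[symmetric] y_V] .
  have "y \<notin> out_ball x"
    using out_twin_unreachable[OF \<open>x \<in> V\<close> y(1)[symmetric] y(2)[symmetric]] by (auto simp: out_ball_def)
  moreover have "q \<notin> out_ball x"
  proof
    assume "q \<in> out_ball x"
    then obtain p where p: "dwalk E p x q" "length p \<le> Suc k" by (auto simp: out_ball_def)
    have "dwalk E (butlast p @ [x]) x x" using dwalk_butlast_snoc[OF p(1) q(1)[symmetric] q(2)] .
    then have "butlast p @ [x] = [x]" by (rule short_closed_dwalk) (use p(2) \<open>x \<in> V\<close> in auto)
    then show False using dwalk_length_ge_2[OF p(1) q(1)[symmetric]] by (cases p rule: rev_cases) auto
  qed
  moreover have "r \<notin> out_ball x"
  proof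
    assume "r \<in> out_ball x"
    then obtain p where p: "dwalk E p x r" "length p \<le> Suc k" by (auto simp: out_ball_def)
    have "x \<noteq> r" using in_xy r(2) by auto
    then have "dwalk E (butlast p @ [y]) x y" using dwalk_butlast_snoc[OF p(1) _ r(2)] by blast
    then have "y \<in> out_ball x" using p(2) by (auto simp: out_ball_def)
    with \<open>y \<notin> out_ball x\<close> show False by contradiction
  qed
  ultimately have subset: "{y, q, r} \<subseteq> V - out_ball x" using y_V q_V r_V by blast
  have "y \<noteq> q" "q \<noteq> r" using in_xy q(2) r(2) by auto
  then have "card {y, q, r} = 3" using r(1) by simp
  moreover have "card (V - out_ball x) = 3"
    using card_Diff_subset[OF finite_subset[OF out_ball_subset_V finite_V] out_ball_subset_V]
      card_out_ball[OF out_degree] card_V \<open>x \<in> V\<close> by simp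
  ultimately show ?thesis using card_subset_eq[OF finite_Diff[OF finite_V] subset] by simp
qed

lemma dwalk_to_out_twin_via_other:
  assumes "x \<in> V" "out_nbrs E x = {e, e'}" "f \<noteq> e" "out_nbrs E f = out_nbrs E e"
    and "dwalk E (x # p) x f" "length p \<le> Suc k"
  shows "dwalk E p e' f"
proof -
  have xe: "E x e" using assms(2) by (metis insertI1 mem_out_nbrs_iff)
  have e_V: "e \<in> V" using arc_in_V xe by blast
  have "x \<noteq> f"
  proof
    assume "x = f"
    then have "E e e" using xe assms(4) by (metis mem_out_nbrs_iff)
    then show False using no_loop k_ge_3 by simp
  qed
  then have ne: "p \<noteq> []" using assms(5) by auto
  have xh: "E x (hd p)" and p: "dwalk E p (hd p) f" using assms(5) dwalk_Cons_iff[OF ne] by auto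
  have "hd p \<noteq> e"
  proof
    assume "hd p = e"
    then show False
      using out_twin_unreachable[OF e_V assms(3)[symmetric] assms(4)[symmetric]] p assms(6) by simp
  qed
  then have "hd p = e'" using xh assms(2) by (metis insertE mem_out_nbrs_iff singletonD)
  with p show ?thesis by simp
qed

lemma dwalk_to_out_twin_of_out_nbr_length:
  assumes "x \<in> V" "E x e" "f \<noteq> e" "out_nbrs E f = out_nbrs E e"
    and "dwalk E w x f" "length w \<le> Suc k"
  shows "length w = Suc k"
proof (rule ccontr)
  assume short: "length w \<noteq> Suc k"
  obtain m where em: "E e m" using ex_out_nbr arc_in_V assms(2) by blast
  then have fm: "E f m" using assms(4) by (metis mem_out_nbrs_iff)
  have "w @ [m] = [x, e, m]"
    using dwalk_unique[OF dwalk_snoc[OF assms(5) fm], of "[x, e, m]"] assms(1,2,6) em k_ge_3 short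
    by simp
  then show False using assms(3,5) by (auto simp: dwalk_def)
qed

lemma other_in_nbr_outside_out_ball:
  assumes "x \<in> V" "out_nbrs E x = {e, e'}" "f \<noteq> e" "out_nbrs E f = out_nbrs E e"
    and w: "dwalk E (w @ [f]) x f" "length w = k"
    and "E h f" "h \<noteq> last w"
  shows "h \<notin> out_ball x"
proof
  assume "h \<in> out_ball x"
  then obtain q where q: "dwalk E q x h" "length q \<le> Suc k" by (auto simp: out_ball_def)
  have qf: "dwalk E (q @ [f]) x f" using dwalk_snoc[OF q(1) \<open>E h f\<close>] .
  show False
  proof (cases "length q \<le> k")
    case True
    then have "q @ [f] = w @ [f]" using dwalk_unique[OF qf w(1)] w(2) assms(1) by simp
    then show False using q(1) \<open>h \<noteq> last w\<close> by (auto simp: dwalk_def)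
  next
    case False
    \<comment> \<open>Both walks leave x through e', giving two walks from e' to f of lengths k - 1 and k.\<close>
    have "w \<noteq> []" "q \<noteq> []" using w(2) k_ge_3 q(1) by auto
    moreover have "hd w = x" "hd q = x" using \<open>w \<noteq> []\<close> w(1) q(1) by (auto simp: dwalk_def)
    ultimately have "w = x # tl w" "q = x # tl q" by (metis list.collapse)+
    then have "dwalk E (x # (tl w @ [f])) x f" "dwalk E (x # (tl q @ [f])) x f"
      using w(1) qf by (metis append_Cons)+
    then have "dwalk E (tl w @ [f]) e' f" "dwalk E (tl q @ [f]) e' f"
      using dwalk_to_out_twin_via_other[OF assms(1-4)] w(2) q(2) by simp_all
    moreover have "e' \<in> V" using assms(2) arc_in_V by (metis insertI1 insert_commute mem_out_nbrs_iff)
    ultimately have "tl w @ [f] = tl q @ [f]"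
      using dwalk_unique[of "tl w @ [f]" e' f "tl q @ [f]"] w(2) q(2) by simp
    then have "length (tl w) = length (tl q)" by simp
    then show False using w(2) q(2) False k_ge_3 by simp
  qed
qed

lemma out_twin_of_out_nbr_not_in_twin:
  assumes "x \<in> V" "E x e" "out_nbrs E f = out_nbrs E e"
  shows "in_nbrs E f \<noteq> in_nbrs E x"
proof
  assume in_fx: "in_nbrs E f = in_nbrs E x"
  obtain m where em: "E e m" using ex_out_nbr arc_in_V assms(2) by blast
  then have "E f m" using assms(3) by (metis mem_out_nbrs_iff)
  then have "[x, e, m] = [f, m]"
    by (intro in_twin_dwalks_eq[OF assms(1)]) (use in_fx assms(2) em k_ge_3 in auto)
  then show False by simp
qed

lemma in_twin_eq_if_arc_to_out_twin:
  assumes "x \<in> V" "E x e" "out_nbrs E f = out_nbrs E e" "in_nbrs E h = in_nbrs E x" "E h f"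
  shows "h = x"
proof -
  obtain m where em: "E e m" using ex_out_nbr arc_in_V assms(2) by blast
  then have "E f m" using assms(3) by (metis mem_out_nbrs_iff)
  then have "[x, e, m] = [h, f, m]"
    by (intro in_twin_dwalks_eq[OF assms(1)]) (use assms(2,4,5) em k_ge_3 in auto)
  then show ?thesis by simp
qed

lemma out_twin_of_out_nbr_in_out_ball:
  assumes card_V: "card V = moore_bound 2 k + 3" and x: "x \<in> V"
    and y: "y \<noteq> x" "out_nbrs E y = out_nbrs E x"
    and q: "q \<noteq> x" "in_nbrs E q = in_nbrs E x"
    and r: "r \<noteq> y" "in_nbrs E r = in_nbrs E y"
    and f: "E x e" "f \<noteq> e" "out_nbrs E f = out_nbrs E e"
  shows "f \<in> out_ball x"
proof -
  have e_V: "e \<in> V" and y_V: "y \<in> V" using arc_in_V f(1) out_twin_in_V[OF y(2)[symmetric] x] by auto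
  have ye: "E y e" using f(1) y(2) by (metis mem_out_nbrs_iff)
  have "f \<noteq> y"
  proof
    assume "f = y"
    then have "E e e" using ye f(3) by (metis mem_out_nbrs_iff)
    then show False using no_loop k_ge_3 by simp
  qed
  moreover have "f \<noteq> q" "f \<noteq> r"
    using out_twin_of_out_nbr_not_in_twin[OF x f(1) f(3)] out_twin_of_out_nbr_not_in_twin[OF y_V ye f(3)]
      q(2) r(2) by auto
  moreover have "f \<in> V" using out_twin_in_V[OF f(3)[symmetric] e_V] .
  ultimately show ?thesis using outliers_eq[OF card_V x y q r] by blast
qed

end

locale two_diregular_no_single_common = two_diregular +
  assumes common_out_nbrs_ne_1:
    "u \<in> V \<Longrightarrow> v \<in> V \<Longrightarrow> u \<noteq> v \<Longrightarrow> card (out_nbrs E u \<inter> out_nbrs E v) \<noteq> 1"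
begin

lemma out_nbrs_eq_if_common_out_nbr:
  assumes "u \<in> V" "v \<in> V" "u \<noteq> v" "E u w" "E v w"
  shows "out_nbrs E u = out_nbrs E v"
proof -
  let ?I = "out_nbrs E u \<inter> out_nbrs E v"
  have "card ?I \<noteq> 0" using assms(4,5) finite_out_nbrs by auto
  moreover have "card ?I \<noteq> 1" using common_out_nbrs_ne_1 assms(1-3) .
  moreover have "card ?I \<le> 2" using card_mono[OF finite_out_nbrs, of ?I u] out_degree[OF assms(1)] by auto
  ultimately have "card ?I = 2" by linarith
  then have "?I = out_nbrs E u" "?I = out_nbrs E v"
    using card_subset_eq[OF finite_out_nbrs] out_degree assms(1,2) by (metis inf_le1, metis inf_le2)
  then show ?thesis by simp
qed

lemma ex_out_twin:
  assumes "e \<in> V"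
  obtains f where "f \<noteq> e" "out_nbrs E f = out_nbrs E e"
proof -
  obtain m where em: "E e m" using ex_out_nbr[OF assms] by blast
  then have "m \<in> V" using arc_in_V by blast
  then obtain f where f: "f \<noteq> e" "in_nbrs E m = {e, f}"
    using card_2_obtain_other[OF in_degree] em by (metis mem_in_nbrs_iff)
  then have "E f m" by (metis insertI1 insert_commute mem_in_nbrs_iff)
  then have "out_nbrs E f = out_nbrs E e"
    using out_nbrs_eq_if_common_out_nbr[OF _ assms f(1) _ em] arc_in_V by blast
  with f(1) show ?thesis by (rule that)
qed

lemma ex_in_twin:
  assumes "x \<in> V"
  obtains q where "q \<noteq> x" "in_nbrs E q = in_nbrs E x"
proof -
  obtain p where px: "E p x" using ex_in_nbr[OF assms] by blast
  then have p_V: "p \<in> V" using arc_in_V by blast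
  then obtain q where q: "q \<noteq> x" "out_nbrs E p = {x, q}"
    using card_2_obtain_other[OF out_degree] px by (metis mem_out_nbrs_iff)
  then have pq: "E p q" by (metis insertI1 insert_commute mem_out_nbrs_iff)
  \<comment> \<open>Every in-neighbour of x shares x, hence its whole out-neighbourhood, with p.\<close>
  have "in_nbrs E x \<subseteq> in_nbrs E q"
  proof
    fix p' assume "p' \<in> in_nbrs E x"
    then have p'x: "E p' x" by simp
    show "p' \<in> in_nbrs E q"
    proof (cases "p' = p")
      case False
      have "out_nbrs E p' = out_nbrs E p"
        using out_nbrs_eq_if_common_out_nbr[OF _ p_V False p'x px] arc_in_V p'x by blast
      then show ?thesis using pq by (metis mem_in_nbrs_iff mem_out_nbrs_iff)
    qed (use pq in simp)
  qed
  then have "in_nbrs E q = in_nbrs E x"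
    using card_subset_eq[OF finite_in_nbrs] in_degree assms in_degree arc_in_V pq by metis
  with q(1) show ?thesis by (rule that)
qed

lemma card_V_ne_excess_3: "card V \<noteq> moore_bound 2 k + 3"
proof
  assume card_V: "card V = moore_bound 2 k + 3"
  then have "V \<noteq> {}" by auto
  then obtain x where x: "x \<in> V" by blast
  obtain e where xe: "E x e" using ex_out_nbr[OF x] by blast
  obtain e' where e': "e' \<noteq> e" "out_nbrs E x = {e, e'}"
    using card_2_obtain_other[OF out_degree[OF x]] xe by (metis mem_out_nbrs_iff)
  have e_V: "e \<in> V" using arc_in_V xe by blast
  obtain y where y: "y \<noteq> x" "out_nbrs E y = out_nbrs E x" using ex_out_twin[OF x] .
  have y_V: "y \<in> V" using out_twin_in_V[OF y(2)[symmetric] x] .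
  obtain q where q: "q \<noteq> x" "in_nbrs E q = in_nbrs E x" using ex_in_twin[OF x] .
  obtain r where r: "r \<noteq> y" "in_nbrs E r = in_nbrs E y" using ex_in_twin[OF y_V] .
  obtain f where f: "f \<noteq> e" "out_nbrs E f = out_nbrs E e" using ex_out_twin[OF e_V] .
  have outliers: "V - out_ball x = {y, q, r}" using outliers_eq[OF card_V x y q r] .
  have "f \<in> out_ball x" using out_twin_of_out_nbr_in_out_ball[OF card_V x y q r xe f] .
  then obtain w where w: "dwalk E w x f" "length w \<le> Suc k" by (auto simp: out_ball_def)
  have w_len: "length w = Suc k" using dwalk_to_out_twin_of_out_nbr_length[OF x xe f w] .
  define u where "u = butlast w"
  have w_eq: "w = u @ [f]" and u_len: "length u = k"
    using w(1) w_len by (auto simp: u_def dwalk_def)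
  have "u \<noteq> []" using u_len k_ge_3 by auto
  then have uf: "E (last u) f" using w(1) unfolding w_eq by (simp add: dwalk_snoc_iff)
  have f_V: "f \<in> V" using out_twin_in_V[OF f(2)[symmetric] e_V] .
  obtain h where h: "h \<noteq> last u" "in_nbrs E f = {last u, h}"
    using card_2_obtain_other[OF in_degree[OF f_V]] uf by (metis mem_in_nbrs_iff)
  then have hf: "E h f" by (metis insertI1 insert_commute mem_in_nbrs_iff)
  have "h \<notin> out_ball x"
    using other_in_nbr_outside_out_ball[OF x e'(2) f w(1)[unfolded w_eq] u_len hf h(1)] .
  moreover have "h \<noteq> y"
  proof
    assume "h = y"
    then have "E x f" using hf y(2) by (metis mem_out_nbrs_iff)
    then have "[x, f] = w" using dwalk_unique[of "[x, f]" x f w] w x k_ge_3 by simp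
    then show False using w_len k_ge_3 by auto
  qed
  moreover have "h \<noteq> q" "h \<noteq> r"
    using in_twin_eq_if_arc_to_out_twin[OF x xe f(2) _ hf] q
      in_twin_eq_if_arc_to_out_twin[OF y_V _ f(2) _ hf] r y(2) xe by (metis mem_out_nbrs_iff)+
  moreover have "h \<in> V" using arc_in_V hf by blast
  ultimately show False using outliers by blast
qed

end

theorem theorem2:
  fixes V :: "'a set" and E :: "'a \<Rightarrow> 'a \<Rightarrow> bool" and k :: nat
  assumes "k \<ge> 3"
    and "diregular_dk_eps V E 2 k 3"
  shows "\<exists>u\<in>V. \<exists>v\<in>V. u \<noteq> v \<and> card (out_nbrs E u \<inter> out_nbrs E v) = 1"
proof (rule ccontr)
  assume "\<not> ?thesis"
  then interpret two_diregular_no_single_common V E k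
    by unfold_locales (use assms in \<open>auto simp: diregular_dk_eps_def\<close>)
  show False using card_V_ne_excess_3 assms(2) by (simp add: diregular_dk_eps_def)
qed

end
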